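(* $\sqrt[3]{2}\notin\mathbb F_0$. Equivalently, given the points $(0,0)$ and $(0,1)$, one cannot construct by origami two points at distance $\sqrt[3]{2}$, so a cube with twice the volume of the unit cube cannot be constructed by origami.
   Context: An origami pair is a pair $(\mathcal P,\mathcal L)$ where $\mathcal P\subset\mathbb R^2$ is a set of points and $\mathcal L$ is a collection of lines in $\mathbb R^2$ such that: (i) the intersection point of any two non-parallel lines of $\mathcal L$ lies in $\mathcal P$; (ii) for any two distinct points of $\mathcal P$, the line through them is in $\mathcal L$; (iii) for any two distinct points of $\mathcal P$, the perpendicular bisector of the segment joining them is in $\mathcal L$; (iv) if $L_1,L_2\in\mathcal L$, then every line equidistant from $L_1$ and $L_2$ is in $\mathcal L$ (the midline if they are parallel, the angle bisectors if they intersect); (v) if $L_1,L_2\in\mathcal L$, then the mirror reflection of $L_2$ across $L_1$ is in $\mathcal L$. A set $\mathcal P\subset\mathbb R^2$ is closed under origami constructions if there is a collection of lines $\mathcal L$ with $(\mathcal P,\mathcal L)$ an origami pair. The set of origami constructible points is $\mathcal P_0=\bigcap\{\mathcal P : (0,0),(0,1)\in\mathcal P \text{ and } \mathcal P \text{ is closed under origami constructions}\}$. The set of origami numbers is $\mathbb F_0=\{\alpha\in\mathbb R : \exists v_1,v_2\in\mathcal P_0,\ |\alpha|=\operatorname{dist}(v_1,v_2)\}$. *)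

theory Defs
  imports "HOL-Analysis.Analysis"
begin

type_synonym point = "real \<times> real"

definition line_through :: "point \<Rightarrow> point \<Rightarrow> point set" where
  "line_through p q = {p + t *\<^sub>R (q - p) | t. True}"

definition is_line :: "point set \<Rightarrow> bool" where
  "is_line L \<longleftrightarrow> (\<exists>p q. p \<noteq> q \<and> L = line_through p q)"

definition parallel_lines :: "point set \<Rightarrow> point set \<Rightarrow> bool" where
  "parallel_lines L1 L2 \<longleftrightarrow> L1 = L2 \<or> L1 \<inter> L2 = {}"

definition perp_bisector :: "point \<Rightarrow> point \<Rightarrow> point set" where
  "perp_bisector p q = {x. dist x p = dist x q}"

definition reflect_pt :: "point set \<Rightarrow> point \<Rightarrow> point" where
  "reflect_pt L x = 2 *\<^sub>R closest_point L x - x"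

definition equidistant_line :: "point set \<Rightarrow> point set \<Rightarrow> point set \<Rightarrow> bool" where
  "equidistant_line L1 L2 M \<longleftrightarrow> is_line M \<and> (\<forall>x\<in>M. infdist x L1 = infdist x L2)"

definition origami_pair :: "point set \<Rightarrow> point set set \<Rightarrow> bool" where
  "origami_pair P \<L> \<longleftrightarrow>
     (\<forall>L\<in>\<L>. is_line L) \<and>
     (\<forall>L1\<in>\<L>. \<forall>L2\<in>\<L>. \<not> parallel_lines L1 L2 \<longrightarrow> L1 \<inter> L2 \<subseteq> P) \<and>
     (\<forall>p\<in>P. \<forall>q\<in>P. p \<noteq> q \<longrightarrow> line_through p q \<in> \<L>) \<and>
     (\<forall>p\<in>P. \<forall>q\<in>P. p \<noteq> q \<longrightarrow> perp_bisector p q \<in> \<L>) \<and>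
     (\<forall>L1\<in>\<L>. \<forall>L2\<in>\<L>. L1 \<noteq> L2 \<longrightarrow> (\<forall>M. equidistant_line L1 L2 M \<longrightarrow> M \<in> \<L>)) \<and>
     (\<forall>L1\<in>\<L>. \<forall>L2\<in>\<L>. reflect_pt L1 ` L2 \<in> \<L>)"

definition closed_under_origami :: "point set \<Rightarrow> bool" where
  "closed_under_origami P \<longleftrightarrow> (\<exists>\<L>. origami_pair P \<L>)"

definition origami_points :: "point set" where
  "origami_points = \<Inter>{P. (0,0) \<in> P \<and> (0,1) \<in> P \<and> closed_under_origami P}"

definition origami_numbers :: "real set" where
  "origami_numbers = {\<alpha>. \<exists>v1\<in>origami_points. \<exists>v2\<in>origami_points. \<bar>\<alpha>\<bar> = dist v1 v2}"

end

theory Submission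
  imports Defs
begin

text \<open>All origami constructions stay inside the plane over the field of reals obtained from
  \<open>\<rat>\<close> by finitely many real quadratic extensions: lines with equations \<open>a x + b y = c\<close>
  whose coefficients lie in this field, together with the points whose coordinates lie in it,
  form an origami pair. Intersections, perpendicular bisectors and reflections are computed
  rationally from the coefficients, and angle bisectors only need the normalising square
  roots \<open>\<surd>(a\<^sup>2 + b\<^sup>2)\<close>. Distances between such points lie in the field as well. But an
  element of a real quadratic extension of \<open>K\<close> whose cube lies in \<open>K\<close> already lies in \<open>K\<close>
  (its conjugate has the same cube), so the irrational number \<open>root 3 2\<close> is not in the field.\<close>

section \<open>Real quadratic towers\<close>

definition real_subfield :: "real set \<Rightarrow> bool" where
  "real_subfield K \<longleftrightarrow> \<rat> \<subseteq> K \<and> (\<forall>x\<in>K. \<forall>y\<in>K. x + y \<in> K \<and> x * y \<in> K) \<and>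
     (\<forall>x\<in>K. - x \<in> K \<and> inverse x \<in> K)"

context
  fixes K :: "real set"
  assumes K: "real_subfield K"
begin

lemma real_subfield_Rats: "x \<in> \<rat> \<Longrightarrow> x \<in> K"
  using K unfolding real_subfield_def by blast

lemma real_subfield_add: "x \<in> K \<Longrightarrow> y \<in> K \<Longrightarrow> x + y \<in> K"
  using K unfolding real_subfield_def by blast

lemma real_subfield_mult: "x \<in> K \<Longrightarrow> y \<in> K \<Longrightarrow> x * y \<in> K"
  using K unfolding real_subfield_def by blast

lemma real_subfield_uminus: "x \<in> K \<Longrightarrow> - x \<in> K"
  using K unfolding real_subfield_def by blast

lemma real_subfield_inverse: "x \<in> K \<Longrightarrow> inverse x \<in> K"
  using K unfolding real_subfield_def by blast

lemma real_subfield_diff: "x \<in> K \<Longrightarrow> y \<in> K \<Longrightarrow> x - y \<in> K"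
  using real_subfield_add real_subfield_uminus by (metis diff_conv_add_uminus)

lemma real_subfield_divide: "x \<in> K \<Longrightarrow> y \<in> K \<Longrightarrow> x / y \<in> K"
  using real_subfield_mult real_subfield_inverse by (metis divide_inverse)

lemma real_subfield_power: "x \<in> K \<Longrightarrow> x ^ n \<in> K"
  by (induction n) (simp_all add: real_subfield_Rats real_subfield_mult)

lemma real_subfield_numeral: "numeral n \<in> K" "0 \<in> K" "1 \<in> K"
  by (simp_all add: real_subfield_Rats)

lemmas real_subfield_intros = real_subfield_add real_subfield_mult real_subfield_uminus
  real_subfield_diff real_subfield_divide real_subfield_power real_subfield_numeral

end

lemma Rats_is_real_subfield: "real_subfield \<rat>"
  unfolding real_subfield_def by (auto intro: Rats_add Rats_mult Rats_minus_iff Rats_inverse)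

definition quadratic_ext :: "real set \<Rightarrow> real \<Rightarrow> real set" where
  "quadratic_ext K k = {a + b * sqrt k | a b. a \<in> K \<and> b \<in> K}"

lemma quadratic_extI: "a \<in> K \<Longrightarrow> b \<in> K \<Longrightarrow> x = a + b * sqrt k \<Longrightarrow> x \<in> quadratic_ext K k"
  unfolding quadratic_ext_def by blast

lemma quadratic_extE:
  "x \<in> quadratic_ext K k \<Longrightarrow> (\<And>a b. a \<in> K \<Longrightarrow> b \<in> K \<Longrightarrow> x = a + b * sqrt k \<Longrightarrow> P) \<Longrightarrow> P"
  unfolding quadratic_ext_def by blast

lemma quadratic_ext_mono: "K \<subseteq> K' \<Longrightarrow> quadratic_ext K k \<subseteq> quadratic_ext K' k"
  unfolding quadratic_ext_def by blast

lemma subset_quadratic_ext: "real_subfield K \<Longrightarrow> K \<subseteq> quadratic_ext K k"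
  by (auto intro: quadratic_extI real_subfield_numeral)

lemma sqrt_in_quadratic_ext: "real_subfield K \<Longrightarrow> sqrt k \<in> quadratic_ext K k"
  by (auto intro: quadratic_extI real_subfield_numeral)

lemma quadratic_ext_eq_self:
  assumes K: "real_subfield K" and "sqrt k \<in> K"
  shows "quadratic_ext K k = K"
  using assms subset_quadratic_ext[OF K]
  by (auto elim!: quadratic_extE intro: real_subfield_intros[OF K])

lemma real_subfield_quadratic_ext:
  assumes K: "real_subfield K" and k: "k \<in> K" "0 \<le> k"
  shows "real_subfield (quadratic_ext K k)"
proof (cases "sqrt k \<in> K")
  case True
  then show ?thesis using K by (simp add: quadratic_ext_eq_self)
next
  case s_notin: False
  let ?E = "quadratic_ext K k" and ?s = "sqrt k"
  note intros = real_subfield_intros[OF K] k(1)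
  have ss: "?s * ?s = k" using k(2) by simp
  have closed: "x + y \<in> ?E \<and> x * y \<in> ?E" if xy: "x \<in> ?E" "y \<in> ?E" for x y
  proof -
    obtain a b where ab: "a \<in> K" "b \<in> K" "x = a + b * ?s"
      using xy(1) by (rule quadratic_extE)
    obtain c d where cd: "c \<in> K" "d \<in> K" "y = c + d * ?s"
      using xy(2) by (rule quadratic_extE)
    have sum: "x + y = (a + c) + (b + d) * ?s"
      using ab(3) cd(3) by (simp add: algebra_simps)
    have prod: "x * y = (a * c + b * d * k) + (a * d + b * c) * ?s"
      using ab(3) cd(3) ss by (simp add: algebra_simps)
    show ?thesis
      by (intro conjI quadratic_extI[OF _ _ sum] quadratic_extI[OF _ _ prod] intros ab(1,2) cd(1,2))
  qed
  have inverse: "inverse x \<in> ?E" if x: "x \<in> ?E" for x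
  proof -
    obtain a b where ab: "a \<in> K" "b \<in> K" "x = a + b * ?s"
      using x by (rule quadratic_extE)
    have conj_nz: "a - b * ?s \<noteq> 0" if "x \<noteq> 0"
    proof
      assume conj0: "a - b * ?s = 0"
      with ab(3) \<open>x \<noteq> 0\<close> have "b \<noteq> 0" by auto
      with conj0 have "?s = a / b" by (simp add: field_simps)
      with s_notin ab show False by (auto intro: intros)
    qed
    have "inverse x \<in> ?E" if "x \<noteq> 0"
    proof (rule quadratic_extI)
      have D: "(a + b * ?s) * (a - b * ?s) = a^2 - b^2 * k"
        using ss by (simp add: algebra_simps power2_eq_square)
      have "inverse x = (a - b * ?s) / ((a + b * ?s) * (a - b * ?s))"
        using ab(3) conj_nz[OF that] by (simp add: inverse_eq_divide)
      also have "\<dots> = a / (a^2 - b^2 * k) + (- b / (a^2 - b^2 * k)) * ?s"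
        unfolding D by (simp add: diff_divide_distrib)
      finally show "inverse x = a / (a^2 - b^2 * k) + (- b / (a^2 - b^2 * k)) * ?s" .
    qed (intro intros ab(1,2))+
    then show ?thesis
      using subset_quadratic_ext[OF K] real_subfield_numeral(2)[OF K] by (cases "x = 0") auto
  qed
  have uminus: "- x \<in> ?E" if x: "x \<in> ?E" for x
  proof -
    obtain a b where ab: "a \<in> K" "b \<in> K" "x = a + b * ?s"
      using x by (rule quadratic_extE)
    then have "- x = (- a) + (- b) * ?s" by simp
    then show ?thesis by (rule quadratic_extI[rotated 2]) (intro intros ab(1,2))+
  qed
  show ?thesis
    using closed uminus inverse subset_quadratic_ext[OF K] K unfolding real_subfield_def by blast
qed

inductive quadratic_tower :: "real set \<Rightarrow> bool" where
  Rats: "quadratic_tower \<rat>"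
| ext: "quadratic_tower K \<Longrightarrow> k \<in> K \<Longrightarrow> 0 \<le> k \<Longrightarrow> quadratic_tower (quadratic_ext K k)"

lemma real_subfield_quadratic_tower: "quadratic_tower K \<Longrightarrow> real_subfield K"
  by (induction rule: quadratic_tower.induct)
    (simp_all add: Rats_is_real_subfield real_subfield_quadratic_ext)

lemma quadratic_tower_common_extension:
  assumes "quadratic_tower K1" "quadratic_tower K2"
  obtains K where "quadratic_tower K" "K1 \<subseteq> K" "K2 \<subseteq> K"
  using assms(2,1)
proof (induction arbitrary: thesis rule: quadratic_tower.induct)
  case Rats
  then show ?case using real_subfield_Rats real_subfield_quadratic_tower by blast
next
  case (ext K2 k)
  then obtain K where K: "quadratic_tower K" "K1 \<subseteq> K" "K2 \<subseteq> K" by blast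
  have "quadratic_tower (quadratic_ext K k)"
    using K ext.hyps by (blast intro: quadratic_tower.ext)
  moreover have "K \<subseteq> quadratic_ext K k"
    using K(1) by (simp add: real_subfield_quadratic_tower subset_quadratic_ext)
  moreover have "quadratic_ext K2 k \<subseteq> quadratic_ext K k"
    using K(3) by (rule quadratic_ext_mono)
  ultimately show ?case using K(2) ext.prems by blast
qed

text \<open>These are the reals constructible by ruler and compass.\<close>
definition constructible_reals :: "real set" where
  "constructible_reals = \<Union>{K. quadratic_tower K}"

lemma constructible_realsI: "quadratic_tower K \<Longrightarrow> x \<in> K \<Longrightarrow> x \<in> constructible_reals"
  unfolding constructible_reals_def by blast

lemma constructible_realsE:
  "x \<in> constructible_reals \<Longrightarrow> (\<And>K. quadratic_tower K \<Longrightarrow> x \<in> K \<Longrightarrow> P) \<Longrightarrow> P"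
  unfolding constructible_reals_def by blast

lemma real_subfield_constructible_reals: "real_subfield constructible_reals"
proof -
  have binary: "x + y \<in> constructible_reals \<and> x * y \<in> constructible_reals"
    if xy: "x \<in> constructible_reals" "y \<in> constructible_reals" for x y
  proof -
    obtain K1 K2 where "quadratic_tower K1" "x \<in> K1" "quadratic_tower K2" "y \<in> K2"
      using xy by (meson constructible_realsE)
    then obtain K where K: "quadratic_tower K" "x \<in> K" "y \<in> K"
      by (metis quadratic_tower_common_extension subsetD)
    then show ?thesis
      using real_subfield_quadratic_tower[OF K(1)]
      by (auto intro: constructible_realsI[OF K(1)] real_subfield_add real_subfield_mult)
  qed
  have unary: "- x \<in> constructible_reals \<and> inverse x \<in> constructible_reals"
    if "x \<in> constructible_reals" for x
    using that by (rule constructible_realsE)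
      (auto intro: constructible_realsI real_subfield_uminus real_subfield_inverse
        real_subfield_quadratic_tower)
  have "\<rat> \<subseteq> constructible_reals"
    using constructible_realsI[OF quadratic_tower.Rats] by blast
  with binary unary show ?thesis unfolding real_subfield_def by blast
qed

lemmas constructible_reals_intros = real_subfield_intros[OF real_subfield_constructible_reals]

lemma constructible_reals_sqrt:
  assumes "x \<in> constructible_reals" "0 \<le> x"
  shows "sqrt x \<in> constructible_reals"
proof -
  obtain K where K: "quadratic_tower K" "x \<in> K"
    using assms(1) by (rule constructible_realsE)
  then have "quadratic_tower (quadratic_ext K x)"
    using assms(2) by (rule quadratic_tower.ext)
  moreover have "sqrt x \<in> quadratic_ext K x"
    using K(1) by (simp add: real_subfield_quadratic_tower sqrt_in_quadratic_ext)
  ultimately show ?thesis by (rule constructible_realsI)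
qed

lemma real_cube_eq_cube_iff: "(x::real) ^ 3 = y ^ 3 \<longleftrightarrow> x = y"
  by (metis odd_numeral odd_real_root_power_cancel semiring_norm(5))

text \<open>If \<open>x = a + b\<surd>k\<close> with \<open>\<surd>k \<notin> K\<close> and \<open>x\<^sup>3 = A + B\<surd>k \<in> K\<close>, then \<open>B = 0\<close>, so the
  conjugate \<open>a - b\<surd>k\<close>, whose cube is \<open>A - B\<surd>k\<close>, has the same cube as \<open>x\<close>; real cubes being
  injective, \<open>b\<surd>k = 0\<close>.\<close>
lemma cube_in_quadratic_ext:
  assumes K: "real_subfield K" and k: "k \<in> K" "0 \<le> k"
    and x: "x \<in> quadratic_ext K k" and x3: "x ^ 3 \<in> K"
  shows "x \<in> K"
proof (cases "sqrt k \<in> K")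
  case True
  with x show ?thesis using K by (simp add: quadratic_ext_eq_self)
next
  case s_notin: False
  let ?s = "sqrt k"
  note intros = real_subfield_intros[OF K] k(1)
  obtain a b where ab: "a \<in> K" "b \<in> K" "x = a + b * ?s"
    using x by (rule quadratic_extE)
  define A where "A = a ^ 3 + 3 * a * b ^ 2 * k"
  define B where "B = 3 * a ^ 2 * b + b ^ 3 * k"
  have ss: "?s * ?s = k" using k(2) by simp
  have "(a + b * ?s) ^ 3 = a ^ 3 + 3 * a ^ 2 * b * ?s + 3 * a * b ^ 2 * (?s * ?s) + b ^ 3 * (?s * ?s) * ?s"
    and "(a - b * ?s) ^ 3 = a ^ 3 - 3 * a ^ 2 * b * ?s + 3 * a * b ^ 2 * (?s * ?s) - b ^ 3 * (?s * ?s) * ?s"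
    by (simp_all only: power3_eq_cube power2_eq_square) (simp_all add: algebra_simps)
  then have cube_plus: "(a + b * ?s) ^ 3 = A + B * ?s"
    and cube_minus: "(a - b * ?s) ^ 3 = A - B * ?s"
    unfolding ss A_def B_def by (simp_all add: algebra_simps)
  have "B = 0"
  proof (rule ccontr)
    assume "B \<noteq> 0"
    then have "?s = (x ^ 3 - A) / B" using ab(3) cube_plus by (simp add: field_simps)
    moreover have "(x ^ 3 - A) / B \<in> K" unfolding A_def B_def by (intro intros x3 ab(1,2))
    ultimately show False using s_notin by simp
  qed
  then have "(a - b * ?s) ^ 3 = x ^ 3" using ab(3) cube_plus cube_minus by simp
  then have "b * ?s = 0" using ab(3) by (simp add: real_cube_eq_cube_iff)
  then have "x = a" using ab(3) by simp
  with ab(1) show ?thesis by simp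
qed

lemma quadratic_tower_cube_Rats: "quadratic_tower K \<Longrightarrow> x \<in> K \<Longrightarrow> x ^ 3 \<in> \<rat> \<Longrightarrow> x \<in> \<rat>"
proof (induction arbitrary: x rule: quadratic_tower.induct)
  case Rats
  then show ?case by simp
next
  case (ext K k)
  have "real_subfield K" using ext.hyps(1) by (rule real_subfield_quadratic_tower)
  then have "x \<in> K" using ext.hyps(2,3) ext.prems real_subfield_Rats cube_in_quadratic_ext by blast
  then show ?case using ext.IH ext.prems(2) by blast
qed

lemma constructible_reals_cube_Rats: "x \<in> constructible_reals \<Longrightarrow> x ^ 3 \<in> \<rat> \<Longrightarrow> x \<in> \<rat>"
  by (auto elim: constructible_realsE intro: quadratic_tower_cube_Rats)

lemma Rats_cube_neq_two: "(x::real) \<in> \<rat> \<Longrightarrow> x ^ 3 \<noteq> 2"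
proof
  assume x: "x \<in> \<rat>" "x ^ 3 = 2"
  obtain m n :: nat where n: "n \<noteq> 0" "\<bar>x\<bar> = real m / real n" "coprime m n"
    using Rats_abs_nat_div_natE[OF x(1)] by metis
  have "x > 0" using x(2) zero_less_power_eq[of x 3] by simp
  then have "real m = x * real n" using n by simp
  then have "real m ^ 3 = 2 * real n ^ 3" using x(2) by (simp add: power_mult_distrib)
  then have mn: "m ^ 3 = 2 * n ^ 3" by (metis of_nat_eq_iff of_nat_mult of_nat_numeral of_nat_power)
  then have "even (m ^ 3)" by simp
  then have "even m" by simp
  then obtain j where "m = 2 * j" by blast
  with mn have "n ^ 3 = 2 * (2 * j ^ 3)" by (simp add: power_mult_distrib)
  then have "even (n ^ 3)" by simp
  then have "even n" by simp
  with \<open>even m\<close> n(3) show False using coprime_common_divisor_nat[of m n 2] by simp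
qed

lemma cube_root_two_not_constructible: "root 3 2 \<notin> constructible_reals"
proof
  have "root 3 2 ^ 3 = (2::real)" by (simp add: odd_real_root_pow)
  moreover assume "root 3 2 \<in> constructible_reals"
  ultimately show False using constructible_reals_cube_Rats Rats_cube_neq_two by fastforce
qed

section \<open>Lines given by linear equations\<close>

definition coord_line :: "real \<Rightarrow> real \<Rightarrow> real \<Rightarrow> point set" where
  "coord_line a b c = {x. a * fst x + b * snd x = c}"

lemma mem_coord_line [simp]: "x \<in> coord_line a b c \<longleftrightarrow> a * fst x + b * snd x = c"
  unfolding coord_line_def by simp

lemma coord_line_eq_hyperplane: "coord_line a b c = {x. inner (a, b) x = c}"
  unfolding coord_line_def by (simp add: inner_prod_def)

lemma closed_coord_line: "closed (coord_line a b c)"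
  unfolding coord_line_eq_hyperplane by (rule closed_hyperplane)

lemma convex_coord_line: "convex (coord_line a b c)"
  unfolding coord_line_eq_hyperplane by (rule convex_hyperplane)

lemma coord_line_scale:
  assumes "l \<noteq> 0"
  shows "coord_line (l * a) (l * b) (l * c) = coord_line a b c"
proof (rule set_eqI)
  fix x :: point
  have "x \<in> coord_line (l * a) (l * b) (l * c) \<longleftrightarrow> l * (a * fst x + b * snd x) = l * c"
    by (simp add: algebra_simps)
  with assms show "x \<in> coord_line (l * a) (l * b) (l * c) \<longleftrightarrow> x \<in> coord_line a b c" by simp
qed

lemma line_through_eq_coord_line:
  assumes "p \<noteq> q"
  shows "line_through p q =
    coord_line (snd q - snd p) (fst p - fst q) ((snd q - snd p) * fst p + (fst p - fst q) * snd p)"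
proof (rule set_eqI)
  fix x :: point
  obtain p1 p2 q1 q2 x1 x2 where pqx: "p = (p1, p2)" "q = (q1, q2)" "x = (x1, x2)"
    by (metis surj_pair)
  have "(\<exists>t. x1 = p1 + t * (q1 - p1) \<and> x2 = p2 + t * (q2 - p2)) \<longleftrightarrow>
      (q2 - p2) * x1 + (p1 - q1) * x2 = (q2 - p2) * p1 + (p1 - q1) * p2" (is "?param \<longleftrightarrow> ?eq")
  proof
    show ?eq if ?param
    proof -
      from that obtain t where x1: "x1 = p1 + t * (q1 - p1)" and x2: "x2 = p2 + t * (q2 - p2)"
        by blast
      show ?eq unfolding x1 x2 by (simp add: algebra_simps)
    qed
  next
    assume eq: ?eq
    show ?param
    proof (cases "q1 = p1")
      case True
      with assms pqx have "q2 \<noteq> p2" by simp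
      with True eq show ?thesis by (intro exI[of _ "(x2 - p2) / (q2 - p2)"]) simp
    next
      case False
      have "(x2 - p2) * (q1 - p1) = (x1 - p1) * (q2 - p2)" using eq by (simp add: algebra_simps)
      with False show ?thesis by (intro exI[of _ "(x1 - p1) / (q1 - p1)"]) (simp add: field_simps)
    qed
  qed
  then show "x \<in> line_through p q \<longleftrightarrow> x \<in> coord_line (snd q - snd p) (fst p - fst q)
      ((snd q - snd p) * fst p + (fst p - fst q) * snd p)"
    unfolding line_through_def pqx by auto
qed

lemma is_line_coord_line:
  assumes "a \<noteq> 0 \<or> b \<noteq> 0"
  shows "is_line (coord_line a b c)"
proof -
  define p where "p = (c / (a\<^sup>2 + b\<^sup>2)) *\<^sub>R (a, b)"
  have "a * a + b * b \<noteq> 0" using assms by (metis power2_eq_square sum_power2_eq_zero_iff)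
  moreover have "a * fst p + b * snd p = c / (a * a + b * b) * (a * a + b * b)"
    by (simp add: p_def power2_eq_square algebra_simps) (simp add: add_divide_distrib)
  ultimately have "a * fst p + b * snd p = c" by simp
  moreover have "p \<noteq> p + (- b, a)" using assms by (auto simp: zero_prod_def)
  ultimately have "coord_line a b c = line_through p (p + (- b, a))"
    by (simp add: line_through_eq_coord_line)
  with \<open>p \<noteq> p + (- b, a)\<close> show ?thesis unfolding is_line_def by blast
qed

lemma is_line_iff_coord_line: "is_line M \<longleftrightarrow> (\<exists>a b c. (a \<noteq> 0 \<or> b \<noteq> 0) \<and> M = coord_line a b c)"
proof
  assume "is_line M"
  then obtain p q where "p \<noteq> q" "M = line_through p q" unfolding is_line_def by blast
  moreover from \<open>p \<noteq> q\<close> have "snd q - snd p \<noteq> 0 \<or> fst p - fst q \<noteq> 0" by (auto simp: prod_eq_iff)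
  ultimately show "\<exists>a b c. (a \<noteq> 0 \<or> b \<noteq> 0) \<and> M = coord_line a b c"
    using line_through_eq_coord_line by blast
next
  assume "\<exists>a b c. (a \<noteq> 0 \<or> b \<noteq> 0) \<and> M = coord_line a b c"
  then show "is_line M" using is_line_coord_line by blast
qed

lemma coord_line_intersection:
  assumes "x \<in> coord_line a1 b1 c1" "x \<in> coord_line a2 b2 c2" "a1 * b2 - a2 * b1 \<noteq> 0"
  shows "fst x = (c1 * b2 - c2 * b1) / (a1 * b2 - a2 * b1)"
    and "snd x = (a1 * c2 - a2 * c1) / (a1 * b2 - a2 * b1)"
proof -
  have e1: "c1 = a1 * fst x + b1 * snd x" and e2: "c2 = a2 * fst x + b2 * snd x"
    using assms(1,2) by simp_all
  show "fst x = (c1 * b2 - c2 * b1) / (a1 * b2 - a2 * b1)"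
    using assms(3) unfolding e1 e2 by (simp add: field_simps)
  show "snd x = (a1 * c2 - a2 * c1) / (a1 * b2 - a2 * b1)"
    using assms(3) unfolding e1 e2 by (simp add: field_simps)
qed

lemma coord_line_eq_if_parallel:
  assumes n1: "a1 \<noteq> 0 \<or> b1 \<noteq> 0" and n2: "a2 \<noteq> 0 \<or> b2 \<noteq> 0"
    and x: "x \<in> coord_line a1 b1 c1" "x \<in> coord_line a2 b2 c2" and parallel: "a1 * b2 = a2 * b1"
  shows "coord_line a1 b1 c1 = coord_line a2 b2 c2"
proof -
  obtain l where l: "l \<noteq> 0" "a1 = l * a2" "b1 = l * b2"
  proof (cases "a2 = 0")
    case True
    with n1 n2 parallel show ?thesis by (intro that[of "b1 / b2"]) auto
  next
    case False
    with n1 parallel show ?thesis by (intro that[of "a1 / a2"]) (auto simp: field_simps)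
  qed
  have "c1 = l * (a2 * fst x + b2 * snd x)" using x(1) unfolding l(2,3) by (simp add: algebra_simps)
  with x(2) l show ?thesis by (simp add: coord_line_scale)
qed

lemma coord_line_foot:
  fixes a b c :: real and x :: point
  assumes "a \<noteq> 0 \<or> b \<noteq> 0"
  defines "f \<equiv> x - ((a * fst x + b * snd x - c) / (a\<^sup>2 + b\<^sup>2)) *\<^sub>R (a, b)"
  shows "f \<in> coord_line a b c" and "z \<in> coord_line a b c \<Longrightarrow> dist x f \<le> dist x z"
proof -
  define t where "t = (a * fst x + b * snd x - c) / (a\<^sup>2 + b\<^sup>2)"
  have N: "a\<^sup>2 + b\<^sup>2 \<noteq> 0" using assms(1) by (simp add: sum_power2_eq_zero_iff)
  have inner_ab: "inner (a, b) y = a * fst y + b * snd y" for y :: point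
    by (simp add: inner_prod_def)
  have "inner (a, b) f = c"
    using N unfolding f_def inner_diff_right inner_scaleR_right inner_ab
    by (simp add: field_simps power2_eq_square)
  then show f: "f \<in> coord_line a b c" by (simp add: inner_ab)
  assume z: "z \<in> coord_line a b c"
  \<comment> \<open>\<open>x - f\<close> is normal to the line and \<open>f - z\<close> runs along it\<close>
  have xf: "x - f = t *\<^sub>R (a, b)" unfolding f_def t_def by simp
  have "inner (a, b) (f - z) = 0" using f z by (simp add: inner_diff_right inner_ab)
  then have "orthogonal (x - f) (f - z)" unfolding orthogonal_def xf inner_scaleR_left by simp
  then have "(norm (x - z))\<^sup>2 = (norm (x - f))\<^sup>2 + (norm (f - z))\<^sup>2"
    using norm_add_Pythagorean[of "x - f" "f - z"] by simp
  then show "dist x f \<le> dist x z"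
    unfolding dist_norm by (metis le_add_same_cancel1 norm_ge_zero power2_le_imp_le zero_le_power2)
qed

lemma closest_point_coord_line:
  assumes "a \<noteq> 0 \<or> b \<noteq> 0"
  shows "closest_point (coord_line a b c) x = x - ((a * fst x + b * snd x - c) / (a\<^sup>2 + b\<^sup>2)) *\<^sub>R (a, b)"
  using coord_line_foot[OF assms]
  by (metis closest_point_unique convex_coord_line closed_coord_line)

lemma infdist_coord_line:
  assumes "a \<noteq> 0 \<or> b \<noteq> 0"
  shows "infdist x (coord_line a b c) = \<bar>a * fst x + b * snd x - c\<bar> / sqrt (a\<^sup>2 + b\<^sup>2)"
proof -
  define t where "t = (a * fst x + b * snd x - c) / (a\<^sup>2 + b\<^sup>2)"
  have norm_ab: "norm (a, b) = sqrt (a\<^sup>2 + b\<^sup>2)" by (simp add: norm_Pair)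
  have pos: "norm (a, b) > 0" using assms by (simp add: zero_prod_def)
  have "infdist x (coord_line a b c) = dist x (x - t *\<^sub>R (a, b))"
    unfolding infdist_eq_setdist t_def
    by (rule setdist_unique) (use coord_line_foot[OF assms] in auto)
  also have "\<dots> = norm (t *\<^sub>R (a, b))" by (simp add: dist_norm del: scaleR_Pair)
  also have "\<dots> = \<bar>a * fst x + b * snd x - c\<bar> / (norm (a, b))\<^sup>2 * norm (a, b)"
    unfolding norm_scaleR t_def norm_ab by (simp add: abs_div)
  also have "\<dots> = \<bar>a * fst x + b * snd x - c\<bar> / sqrt (a\<^sup>2 + b\<^sup>2)"
    using pos unfolding norm_ab[symmetric] by (simp add: power2_eq_square)
  finally show ?thesis .
qed

lemma reflect_pt_coord_line:
  assumes "a \<noteq> 0 \<or> b \<noteq> 0"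
  shows "reflect_pt (coord_line a b c) x = x - (2 * ((a * fst x + b * snd x - c) / (a\<^sup>2 + b\<^sup>2))) *\<^sub>R (a, b)"
  unfolding reflect_pt_def closest_point_coord_line[OF assms] by (simp add: scaleR_2 algebra_simps)

lemma reflect_pt_coord_line_involution:
  assumes "a \<noteq> 0 \<or> b \<noteq> 0"
  shows "reflect_pt (coord_line a b c) (reflect_pt (coord_line a b c) x) = x"
proof -
  let ?R = "reflect_pt (coord_line a b c)"
  define t where "t y = (a * fst y + b * snd y - c) / (a\<^sup>2 + b\<^sup>2)" for y :: point
  have N: "a\<^sup>2 + b\<^sup>2 \<noteq> 0" using assms by (simp add: sum_power2_eq_zero_iff)
  have R: "?R y = y - (2 * t y) *\<^sub>R (a, b)" for y
    unfolding t_def by (rule reflect_pt_coord_line[OF assms])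
  have "a * fst (?R x) + b * snd (?R x) - c = (a * fst x + b * snd x - c) - 2 * (t x * (a\<^sup>2 + b\<^sup>2))"
    unfolding R by (simp add: algebra_simps power2_eq_square)
  also have "t x * (a\<^sup>2 + b\<^sup>2) = a * fst x + b * snd x - c" using N by (simp add: t_def)
  finally have "a * fst (?R x) + b * snd (?R x) - c = - (a * fst x + b * snd x - c)" by simp
  then have tR: "t (?R x) = - t x" unfolding t_def by (simp add: minus_divide_left)
  have "?R (?R x) = ?R x + (2 * t x) *\<^sub>R (a, b)"
    unfolding R[of "?R x"] tR by (simp only: mult_minus_right scaleR_minus_left diff_minus_eq_add)
  also have "\<dots> = x" unfolding R[of x] by (rule diff_add_cancel)
  finally show ?thesis .
qed

lemma reflect_pt_image_coord_line:
  fixes a1 b1 c1 a2 b2 c2 :: real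
  assumes n1: "a1 \<noteq> 0 \<or> b1 \<noteq> 0"
  defines "e \<equiv> (a1 * a2 + b1 * b2) / (a1\<^sup>2 + b1\<^sup>2)"
  shows "reflect_pt (coord_line a1 b1 c1) ` coord_line a2 b2 c2 =
    coord_line (a2 - 2 * e * a1) (b2 - 2 * e * b1) (c2 - 2 * e * c1)"
proof -
  let ?R = "reflect_pt (coord_line a1 b1 c1)"
  have mem: "?R y \<in> coord_line a2 b2 c2 \<longleftrightarrow>
      y \<in> coord_line (a2 - 2 * e * a1) (b2 - 2 * e * b1) (c2 - 2 * e * c1)" for y
  proof -
    define t where "t = (a1 * fst y + b1 * snd y - c1) / (a1\<^sup>2 + b1\<^sup>2)"
    have "t * (a1 * a2 + b1 * b2) = e * (a1 * fst y + b1 * snd y - c1)"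
      unfolding t_def e_def by (simp add: field_simps)
    then have "a2 * fst (?R y) + b2 * snd (?R y) - c2 =
        (a2 - 2 * e * a1) * fst y + (b2 - 2 * e * b1) * snd y - (c2 - 2 * e * c1)"
      unfolding reflect_pt_coord_line[OF n1] t_def[symmetric] by (simp add: algebra_simps)
    then show ?thesis by (simp only: mem_coord_line) linarith
  qed
  have inv: "?R (?R y) = y" for y by (rule reflect_pt_coord_line_involution[OF n1])
  show ?thesis
  proof (intro set_eqI iffI)
    fix y assume "y \<in> ?R ` coord_line a2 b2 c2"
    then obtain z where "z \<in> coord_line a2 b2 c2" "y = ?R z" by blast
    then show "y \<in> coord_line (a2 - 2 * e * a1) (b2 - 2 * e * b1) (c2 - 2 * e * c1)"
      using mem[of y] inv[of z] by simp
  next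
    fix y assume "y \<in> coord_line (a2 - 2 * e * a1) (b2 - 2 * e * b1) (c2 - 2 * e * c1)"
    then have "?R y \<in> coord_line a2 b2 c2" using mem by blast
    then show "y \<in> ?R ` coord_line a2 b2 c2" using image_eqI[of y ?R "?R y"] inv by simp
  qed
qed

section \<open>The constructible plane is closed under origami\<close>

definition constructible_lines :: "point set set" where
  "constructible_lines = {coord_line a b c | a b c.
     a \<in> constructible_reals \<and> b \<in> constructible_reals \<and> c \<in> constructible_reals \<and> (a \<noteq> 0 \<or> b \<noteq> 0)}"

lemma constructible_linesI:
  "a \<in> constructible_reals \<Longrightarrow> b \<in> constructible_reals \<Longrightarrow> c \<in> constructible_reals \<Longrightarrow>
    a \<noteq> 0 \<or> b \<noteq> 0 \<Longrightarrow> coord_line a b c \<in> constructible_lines"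
  unfolding constructible_lines_def by blast

lemma constructible_linesE:
  assumes "L \<in> constructible_lines"
  obtains a b c where "a \<in> constructible_reals" "b \<in> constructible_reals" "c \<in> constructible_reals"
    "a \<noteq> 0 \<or> b \<noteq> 0" "L = coord_line a b c"
  using assms unfolding constructible_lines_def by blast

lemma is_line_constructible_line: "L \<in> constructible_lines \<Longrightarrow> is_line L"
  by (auto elim: constructible_linesE intro: is_line_coord_line)

lemma constructible_lines_inter:
  assumes L1: "L1 \<in> constructible_lines" and L2: "L2 \<in> constructible_lines"
    and not_parallel: "\<not> parallel_lines L1 L2"
  shows "L1 \<inter> L2 \<subseteq> constructible_reals \<times> constructible_reals"
proof
  fix x assume x: "x \<in> L1 \<inter> L2"
  obtain a1 b1 c1 where h1: "a1 \<in> constructible_reals" "b1 \<in> constructible_reals"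
      "c1 \<in> constructible_reals" "a1 \<noteq> 0 \<or> b1 \<noteq> 0" "L1 = coord_line a1 b1 c1"
    using L1 by (rule constructible_linesE)
  obtain a2 b2 c2 where h2: "a2 \<in> constructible_reals" "b2 \<in> constructible_reals"
      "c2 \<in> constructible_reals" "a2 \<noteq> 0 \<or> b2 \<noteq> 0" "L2 = coord_line a2 b2 c2"
    using L2 by (rule constructible_linesE)
  have x1: "x \<in> coord_line a1 b1 c1" and x2: "x \<in> coord_line a2 b2 c2" using x h1(5) h2(5) by auto
  have det: "a1 * b2 - a2 * b1 \<noteq> 0"
    using coord_line_eq_if_parallel[OF h1(4) h2(4) x1 x2] not_parallel h1(5) h2(5)
    unfolding parallel_lines_def by auto
  show "x \<in> constructible_reals \<times> constructible_reals"
    unfolding mem_Times_iff coord_line_intersection[OF x1 x2 det]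
    by (intro conjI constructible_reals_intros h1(1-3) h2(1-3))
qed

lemma line_through_constructible:
  assumes "p \<in> constructible_reals \<times> constructible_reals" "q \<in> constructible_reals \<times> constructible_reals"
    and "p \<noteq> q"
  shows "line_through p q \<in> constructible_lines"
proof -
  have "snd q - snd p \<noteq> 0 \<or> fst p - fst q \<noteq> 0" using \<open>p \<noteq> q\<close> by (auto simp: prod_eq_iff)
  with assms show ?thesis unfolding line_through_eq_coord_line[OF \<open>p \<noteq> q\<close>] mem_Times_iff
    by (intro constructible_linesI constructible_reals_intros) auto
qed

lemma perp_bisector_eq_coord_line:
  "perp_bisector p q = coord_line (2 * (fst q - fst p)) (2 * (snd q - snd p))
     ((fst q)\<^sup>2 + (snd q)\<^sup>2 - (fst p)\<^sup>2 - (snd p)\<^sup>2)"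
proof (rule set_eqI)
  fix x :: point
  have "x \<in> perp_bisector p q \<longleftrightarrow>
      (fst x - fst p)\<^sup>2 + (snd x - snd p)\<^sup>2 = (fst x - fst q)\<^sup>2 + (snd x - snd q)\<^sup>2"
    unfolding perp_bisector_def dist_prod_def dist_real_def by simp
  also have "\<dots> \<longleftrightarrow> x \<in> coord_line (2 * (fst q - fst p)) (2 * (snd q - snd p))
      ((fst q)\<^sup>2 + (snd q)\<^sup>2 - (fst p)\<^sup>2 - (snd p)\<^sup>2)"
    by (simp add: power2_eq_square algebra_simps)
  finally show "x \<in> perp_bisector p q \<longleftrightarrow> x \<in> coord_line (2 * (fst q - fst p)) (2 * (snd q - snd p))
      ((fst q)\<^sup>2 + (snd q)\<^sup>2 - (fst p)\<^sup>2 - (snd p)\<^sup>2)" .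
qed

lemma perp_bisector_constructible:
  assumes "p \<in> constructible_reals \<times> constructible_reals" "q \<in> constructible_reals \<times> constructible_reals"
    and "p \<noteq> q"
  shows "perp_bisector p q \<in> constructible_lines"
proof -
  have "2 * (fst q - fst p) \<noteq> 0 \<or> 2 * (snd q - snd p) \<noteq> 0" using \<open>p \<noteq> q\<close> by (auto simp: prod_eq_iff)
  with assms show ?thesis unfolding perp_bisector_eq_coord_line mem_Times_iff
    by (intro constructible_linesI constructible_reals_intros) auto
qed

lemma line_eq_coord_line_if_two_points:
  assumes M: "is_line M" and uv: "u \<noteq> v" "u \<in> M" "v \<in> M" "u \<in> coord_line A B C" "v \<in> coord_line A B C"
    and nontrivial: "\<not> (A = 0 \<and> B = 0 \<and> C = 0)"
  shows "(A \<noteq> 0 \<or> B \<noteq> 0) \<and> M = coord_line A B C"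
proof
  show AB: "A \<noteq> 0 \<or> B \<noteq> 0" using nontrivial uv(4) by auto
  obtain a b c where abc: "a \<noteq> 0 \<or> b \<noteq> 0" "M = coord_line a b c"
    using M unfolding is_line_iff_coord_line by blast
  have "a * B - A * b = 0"
  proof (rule ccontr)
    assume det: "a * B - A * b \<noteq> 0"
    have u: "u \<in> coord_line a b c" and v: "v \<in> coord_line a b c" using uv(2,3) abc(2) by simp_all
    note u_coords = coord_line_intersection[OF u uv(4) det]
      and v_coords = coord_line_intersection[OF v uv(5) det]
    have "fst u = fst v" "snd u = snd v" unfolding u_coords v_coords by (rule refl)+
    with uv(1) show False by (simp add: prod_eq_iff)
  qed
  then show "M = coord_line A B C"
    using coord_line_eq_if_parallel[OF abc(1) AB _ uv(4)] uv(2) abc(2) by simp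
qed

lemma line_subset_Un_coord_lines:
  assumes M: "is_line M" and sub: "M \<subseteq> coord_line A B C \<union> coord_line A' B' C'"
    and nontrivial: "\<not> (A = 0 \<and> B = 0 \<and> C = 0)" "\<not> (A' = 0 \<and> B' = 0 \<and> C' = 0)"
  shows "(A \<noteq> 0 \<or> B \<noteq> 0) \<and> M = coord_line A B C \<or> (A' \<noteq> 0 \<or> B' \<noteq> 0) \<and> M = coord_line A' B' C'"
proof -
  obtain p q where pq: "p \<noteq> q" "M = line_through p q" using M unfolding is_line_def by blast
  define r where "r = q + (q - p)"
  have "p = p + 0 *\<^sub>R (q - p)" "q = p + 1 *\<^sub>R (q - p)" "r = p + 2 *\<^sub>R (q - p)"
    by (simp_all add: r_def scaleR_2)
  then have on_M: "p \<in> M" "q \<in> M" "r \<in> M" unfolding pq(2) line_through_def by blast+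
  have distinct: "p \<noteq> r" "q \<noteq> r"
  proof -
    have "r - p = 2 *\<^sub>R (q - p)" "r - q = q - p" unfolding r_def by (simp_all add: scaleR_2)
    then show "p \<noteq> r" "q \<noteq> r" using pq(1) by auto
  qed
  let ?G = "coord_line A B C" and ?H = "coord_line A' B' C'"
  have "\<exists>u\<in>{p, q, r}. \<exists>v\<in>{p, q, r}. u \<noteq> v \<and> (u \<in> ?G \<and> v \<in> ?G \<or> u \<in> ?H \<and> v \<in> ?H)"
  proof -
    have "p \<in> ?G \<or> p \<in> ?H" "q \<in> ?G \<or> q \<in> ?H" "r \<in> ?G \<or> r \<in> ?H" using sub on_M by blast+
    then show ?thesis using distinct pq(1) by auto
  qed
  then obtain u v where uv: "u \<noteq> v" "u \<in> M" "v \<in> M"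
    and "u \<in> ?G \<and> v \<in> ?G \<or> u \<in> ?H \<and> v \<in> ?H"
    using on_M by blast
  then show ?thesis
    using line_eq_coord_line_if_two_points[OF M uv _ _ nontrivial(1)]
      line_eq_coord_line_if_two_points[OF M uv _ _ nontrivial(2)] by blast
qed

lemma equidistant_line_constructible:
  assumes L1: "L1 \<in> constructible_lines" and L2: "L2 \<in> constructible_lines" and "L1 \<noteq> L2"
    and M: "equidistant_line L1 L2 M"
  shows "M \<in> constructible_lines"
proof -
  obtain a1 b1 c1 where h1: "a1 \<in> constructible_reals" "b1 \<in> constructible_reals"
      "c1 \<in> constructible_reals" "a1 \<noteq> 0 \<or> b1 \<noteq> 0" "L1 = coord_line a1 b1 c1"
    using L1 by (rule constructible_linesE)
  obtain a2 b2 c2 where h2: "a2 \<in> constructible_reals" "b2 \<in> constructible_reals"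
      "c2 \<in> constructible_reals" "a2 \<noteq> 0 \<or> b2 \<noteq> 0" "L2 = coord_line a2 b2 c2"
    using L2 by (rule constructible_linesE)
  define n1 where "n1 = sqrt (a1\<^sup>2 + b1\<^sup>2)"
  define n2 where "n2 = sqrt (a2\<^sup>2 + b2\<^sup>2)"
  have n_pos: "n1 > 0" "n2 > 0"
    using h1(4) h2(4) unfolding n1_def n2_def by (simp_all add: sum_power2_gt_zero_iff)
  have n_constructible: "n1 \<in> constructible_reals" "n2 \<in> constructible_reals"
    unfolding n1_def n2_def
    by (intro constructible_reals_sqrt constructible_reals_intros h1(1,2) h2(1,2); simp)+
  \<comment> \<open>the two angle bisectors of \<open>L1\<close> and \<open>L2\<close>; for parallel lines, the midline and the empty set\<close>
  define A where "A \<sigma> = n2 * a1 - \<sigma> * n1 * a2" for \<sigma>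
  define B where "B \<sigma> = n2 * b1 - \<sigma> * n1 * b2" for \<sigma>
  define C where "C \<sigma> = n2 * c1 - \<sigma> * n1 * c2" for \<sigma>
  have "M \<subseteq> coord_line (A 1) (B 1) (C 1) \<union> coord_line (A (- 1)) (B (- 1)) (C (- 1))"
  proof
    fix x assume "x \<in> M"
    define l1 where "l1 = a1 * fst x + b1 * snd x - c1"
    define l2 where "l2 = a2 * fst x + b2 * snd x - c2"
    have "\<bar>l1\<bar> / n1 = \<bar>l2\<bar> / n2"
      using M \<open>x \<in> M\<close> unfolding equidistant_line_def h1(5) h2(5) infdist_coord_line[OF h1(4)]
        infdist_coord_line[OF h2(4)] l1_def l2_def n1_def n2_def by simp
    then have "\<bar>n2 * l1\<bar> = \<bar>n1 * l2\<bar>" using n_pos by (simp add: field_simps abs_mult)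
    then have "n2 * l1 = 1 * n1 * l2 \<or> n2 * l1 = - 1 * n1 * l2" by (simp add: abs_eq_iff)
    moreover have "x \<in> coord_line (A \<sigma>) (B \<sigma>) (C \<sigma>) \<longleftrightarrow> n2 * l1 = \<sigma> * n1 * l2" for \<sigma>
      unfolding A_def B_def C_def l1_def l2_def mem_coord_line by (simp add: algebra_simps)
    ultimately show "x \<in> coord_line (A 1) (B 1) (C 1) \<union> coord_line (A (- 1)) (B (- 1)) (C (- 1))"
      by blast
  qed
  moreover have nontrivial: "\<not> (A \<sigma> = 0 \<and> B \<sigma> = 0 \<and> C \<sigma> = 0)" if "\<sigma> \<noteq> 0" for \<sigma>
  proof
    assume "A \<sigma> = 0 \<and> B \<sigma> = 0 \<and> C \<sigma> = 0"
    then have coeffs: "a1 = (\<sigma> * n1 / n2) * a2" "b1 = (\<sigma> * n1 / n2) * b2" "c1 = (\<sigma> * n1 / n2) * c2"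
      using n_pos unfolding A_def B_def C_def by (simp_all add: field_simps)
    have "\<sigma> * n1 / n2 \<noteq> 0" using that n_pos by simp
    then have "L1 = L2" unfolding h1(5) h2(5) coeffs by (rule coord_line_scale)
    with \<open>L1 \<noteq> L2\<close> show False ..
  qed
  moreover have "is_line M" using M unfolding equidistant_line_def by blast
  ultimately obtain \<sigma> where \<sigma>: "\<sigma> \<in> {1, - 1}" "A \<sigma> \<noteq> 0 \<or> B \<sigma> \<noteq> 0" "M = coord_line (A \<sigma>) (B \<sigma>) (C \<sigma>)"
    using line_subset_Un_coord_lines[of M] by (metis insertCI zero_neq_neg_one zero_neq_one)
  then have "\<sigma> \<in> constructible_reals" by (auto intro: constructible_reals_intros)
  then have "A \<sigma> \<in> constructible_reals \<and> B \<sigma> \<in> constructible_reals \<and> C \<sigma> \<in> constructible_reals"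
    unfolding A_def B_def C_def by (intro conjI constructible_reals_intros n_constructible h1(1-3) h2(1-3))
  with \<sigma>(2,3) show ?thesis by (simp add: constructible_linesI)
qed

lemma reflect_image_constructible:
  assumes L1: "L1 \<in> constructible_lines" and L2: "L2 \<in> constructible_lines"
  shows "reflect_pt L1 ` L2 \<in> constructible_lines"
proof -
  obtain a1 b1 c1 where h1: "a1 \<in> constructible_reals" "b1 \<in> constructible_reals"
      "c1 \<in> constructible_reals" "a1 \<noteq> 0 \<or> b1 \<noteq> 0" "L1 = coord_line a1 b1 c1"
    using L1 by (rule constructible_linesE)
  obtain a2 b2 c2 where h2: "a2 \<in> constructible_reals" "b2 \<in> constructible_reals"
      "c2 \<in> constructible_reals" "a2 \<noteq> 0 \<or> b2 \<noteq> 0" "L2 = coord_line a2 b2 c2"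
    using L2 by (rule constructible_linesE)
  define e where "e = (a1 * a2 + b1 * b2) / (a1\<^sup>2 + b1\<^sup>2)"
  have N: "a1\<^sup>2 + b1\<^sup>2 \<noteq> 0" using h1(4) by (simp add: sum_power2_eq_zero_iff)
  have "a2 - 2 * e * a1 \<noteq> 0 \<or> b2 - 2 * e * b1 \<noteq> 0"
  proof (rule ccontr)
    assume "\<not> ?thesis"
    then have a2: "a2 = 2 * e * a1" and b2: "b2 = 2 * e * b1" by simp_all
    have "e * (a1\<^sup>2 + b1\<^sup>2) = a1 * a2 + b1 * b2" using N unfolding e_def by simp
    also have "\<dots> = 2 * (e * (a1\<^sup>2 + b1\<^sup>2))" unfolding a2 b2 by (simp add: power2_eq_square algebra_simps)
    finally have "e = 0" using h1(4) by auto
    with a2 b2 h2(4) show False by simp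
  qed
  moreover have "e \<in> constructible_reals"
    unfolding e_def by (intro constructible_reals_intros h1(1,2) h2(1,2))
  ultimately show ?thesis
    unfolding h1(5) h2(5) reflect_pt_image_coord_line[OF h1(4)] e_def[symmetric]
    by (intro constructible_linesI constructible_reals_intros h1(1-3) h2(1-3))
qed

lemma origami_pair_constructible: "origami_pair (constructible_reals \<times> constructible_reals) constructible_lines"
  unfolding origami_pair_def
proof (intro conjI)
  show "\<forall>L\<in>constructible_lines. is_line L"
    using is_line_constructible_line by blast
  show "\<forall>L1\<in>constructible_lines. \<forall>L2\<in>constructible_lines. \<not> parallel_lines L1 L2 \<longrightarrow>
      L1 \<inter> L2 \<subseteq> constructible_reals \<times> constructible_reals"
    using constructible_lines_inter by blast
  show "\<forall>p\<in>constructible_reals \<times> constructible_reals. \<forall>q\<in>constructible_reals \<times> constructible_reals.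
      p \<noteq> q \<longrightarrow> line_through p q \<in> constructible_lines"
    using line_through_constructible by blast
  show "\<forall>p\<in>constructible_reals \<times> constructible_reals. \<forall>q\<in>constructible_reals \<times> constructible_reals.
      p \<noteq> q \<longrightarrow> perp_bisector p q \<in> constructible_lines"
    using perp_bisector_constructible by blast
  show "\<forall>L1\<in>constructible_lines. \<forall>L2\<in>constructible_lines. L1 \<noteq> L2 \<longrightarrow>
      (\<forall>M. equidistant_line L1 L2 M \<longrightarrow> M \<in> constructible_lines)"
    using equidistant_line_constructible by blast
  show "\<forall>L1\<in>constructible_lines. \<forall>L2\<in>constructible_lines. reflect_pt L1 ` L2 \<in> constructible_lines"
    using reflect_image_constructible by blast
qed

lemma origami_points_subset_constructible: "origami_points \<subseteq> constructible_reals \<times> constructible_reals"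
proof -
  have "(0, 0) \<in> constructible_reals \<times> constructible_reals" "(0, 1) \<in> constructible_reals \<times> constructible_reals"
    by (simp_all add: mem_Times_iff constructible_reals_intros)
  moreover have "closed_under_origami (constructible_reals \<times> constructible_reals)"
    unfolding closed_under_origami_def using origami_pair_constructible by blast
  ultimately show ?thesis unfolding origami_points_def by (intro Inter_lower) blast
qed

lemma origami_numbers_subset_constructible: "origami_numbers \<subseteq> constructible_reals"
proof
  fix \<alpha> assume "\<alpha> \<in> origami_numbers"
  then obtain v1 v2 where v: "v1 \<in> origami_points" "v2 \<in> origami_points" "\<bar>\<alpha>\<bar> = dist v1 v2"
    unfolding origami_numbers_def by blast
  then have "fst v1 \<in> constructible_reals" "snd v1 \<in> constructible_reals"
    "fst v2 \<in> constructible_reals" "snd v2 \<in> constructible_reals"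
    using origami_points_subset_constructible by (auto simp: mem_Times_iff)
  then have "sqrt ((fst v1 - fst v2)\<^sup>2 + (snd v1 - snd v2)\<^sup>2) \<in> constructible_reals"
    by (intro constructible_reals_sqrt constructible_reals_intros) simp_all
  then have "\<bar>\<alpha>\<bar> \<in> constructible_reals"
    unfolding v(3) dist_prod_def dist_real_def by simp
  then show "\<alpha> \<in> constructible_reals"
    using real_subfield_uminus[OF real_subfield_constructible_reals, of "\<bar>\<alpha>\<bar>"]
    by (cases "\<alpha> \<ge> 0") simp_all
qed

theorem mainTheorem8:
  shows "root 3 2 \<notin> origami_numbers"
  using origami_numbers_subset_constructible cube_root_two_not_constructible by blast

end
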